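(* Let $A$ be a left brace and let $a\in A$ be an element of infinite additive order. Let $c=a\star a$ and suppose that $a\star c=0$. Then $\langle a\rangle\cap\langle c\rangle=0$, where $\langle x\rangle$ denotes the cyclic subgroup of $(A,+)$ generated by $x$. In particular, if $a\in\zeta_2(\star,A)$ (and $a$ has infinite additive order), then $\langle a\rangle\cap\langle a\star a\rangle=0$.
   Context: A left brace is a set $A$ with two operations $+$ and $\cdot$ such that $(A,+)$ is an abelian group, $(A,\cdot)$ is a group, and $a(b+c)=ab+ac-a$ for all $a,b,c\in A$. Put $a\star b=ab-a-b$. The $\star$-center is $\zeta(\star,A)=\{a: a\star x=x\star a=0\ \forall x\in A\}$, an ideal of $A$; $\zeta_2(\star,A)$ is defined by $\zeta_2(\star,A)/\zeta(\star,A)=\zeta(\star,A/\zeta(\star,A))$. *)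

theory Defs
  imports Main
begin

definition left_brace ::
  "'a set \<Rightarrow> ('a \<Rightarrow> 'a \<Rightarrow> 'a) \<Rightarrow> 'a \<Rightarrow> ('a \<Rightarrow> 'a)
   \<Rightarrow> ('a \<Rightarrow> 'a \<Rightarrow> 'a) \<Rightarrow> 'a \<Rightarrow> ('a \<Rightarrow> 'a) \<Rightarrow> bool" where
  "left_brace A add zero neg mul one minv \<longleftrightarrow>
     \<comment> \<open>(A,+) abelian group\<close>
     zero \<in> A \<and> (\<forall>x\<in>A. \<forall>y\<in>A. add x y \<in> A) \<and> (\<forall>x\<in>A. neg x \<in> A) \<and>
     (\<forall>x\<in>A. \<forall>y\<in>A. \<forall>z\<in>A. add (add x y) z = add x (add y z)) \<and>
     (\<forall>x\<in>A. \<forall>y\<in>A. add x y = add y x) \<and>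
     (\<forall>x\<in>A. add zero x = x) \<and> (\<forall>x\<in>A. add (neg x) x = zero) \<and>
     \<comment> \<open>(A,\<cdot>) group\<close>
     one \<in> A \<and> (\<forall>x\<in>A. \<forall>y\<in>A. mul x y \<in> A) \<and> (\<forall>x\<in>A. minv x \<in> A) \<and>
     (\<forall>x\<in>A. \<forall>y\<in>A. \<forall>z\<in>A. mul (mul x y) z = mul x (mul y z)) \<and>
     (\<forall>x\<in>A. mul one x = x \<and> mul x one = x) \<and>
     (\<forall>x\<in>A. mul (minv x) x = one \<and> mul x (minv x) = one) \<and>
     \<comment> \<open>left brace compatibility a(b+c) = ab + ac - a\<close>
     (\<forall>a\<in>A. \<forall>b\<in>A. \<forall>c\<in>A.
        mul a (add b c) = add (add (mul a b) (mul a c)) (neg a))"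

definition star :: "('a \<Rightarrow> 'a \<Rightarrow> 'a) \<Rightarrow> ('a \<Rightarrow> 'a) \<Rightarrow> ('a \<Rightarrow> 'a \<Rightarrow> 'a) \<Rightarrow> 'a \<Rightarrow> 'a \<Rightarrow> 'a" where
  "star add neg mul a b = add (add (mul a b) (neg a)) (neg b)"

fun nat_mult :: "('a \<Rightarrow> 'a \<Rightarrow> 'a) \<Rightarrow> 'a \<Rightarrow> nat \<Rightarrow> 'a \<Rightarrow> 'a" where
  "nat_mult add zero 0 x = zero"
| "nat_mult add zero (Suc n) x = add x (nat_mult add zero n x)"

definition int_mult :: "('a \<Rightarrow> 'a \<Rightarrow> 'a) \<Rightarrow> 'a \<Rightarrow> ('a \<Rightarrow> 'a) \<Rightarrow> int \<Rightarrow> 'a \<Rightarrow> 'a" where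
  "int_mult add zero neg k x =
     (if k \<ge> 0 then nat_mult add zero (nat k) x else neg (nat_mult add zero (nat (- k)) x))"

definition cyclic_add :: "('a \<Rightarrow> 'a \<Rightarrow> 'a) \<Rightarrow> 'a \<Rightarrow> ('a \<Rightarrow> 'a) \<Rightarrow> 'a \<Rightarrow> 'a set" where
  "cyclic_add add zero neg x = {int_mult add zero neg k x | k. True}"

definition infinite_add_order :: "('a \<Rightarrow> 'a \<Rightarrow> 'a) \<Rightarrow> 'a \<Rightarrow> 'a \<Rightarrow> bool" where
  "infinite_add_order add zero x \<longleftrightarrow> (\<forall>n::nat. n > 0 \<longrightarrow> nat_mult add zero n x \<noteq> zero)"

definition star_center ::
  "'a set \<Rightarrow> ('a \<Rightarrow> 'a \<Rightarrow> 'a) \<Rightarrow> 'a \<Rightarrow> ('a \<Rightarrow> 'a) \<Rightarrow> ('a \<Rightarrow> 'a \<Rightarrow> 'a) \<Rightarrow> 'a set" where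
  "star_center A add zero neg mul =
     {a \<in> A. \<forall>x\<in>A. star add neg mul a x = zero \<and> star add neg mul x a = zero}"

text \<open>\<zeta>_2: preimage of the \<star>-center of A/\<zeta>. Since (a+\<zeta>)\<star>(x+\<zeta>) = a\<star>x + \<zeta>
  in the quotient brace, a+\<zeta> lies in \<zeta>(A/\<zeta>) iff a\<star>x and x\<star>a lie in \<zeta> for all x.\<close>
definition star_center2 ::
  "'a set \<Rightarrow> ('a \<Rightarrow> 'a \<Rightarrow> 'a) \<Rightarrow> 'a \<Rightarrow> ('a \<Rightarrow> 'a) \<Rightarrow> ('a \<Rightarrow> 'a \<Rightarrow> 'a) \<Rightarrow> 'a set" where
  "star_center2 A add zero neg mul =
     {a \<in> A. \<forall>x\<in>A. star add neg mul a x \<in> star_center A add zero neg mul \<and>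
                    star add neg mul x a \<in> star_center A add zero neg mul}"

end

theory Submission
  imports Defs "HOL-Algebra.Group"
begin

text \<open>For \<open>\<lambda>\<^sub>a x = a x - a\<close> one has \<open>a \<star> y = \<lambda>\<^sub>a y - y\<close>, and the brace law says
  exactly that \<open>\<lambda>\<^sub>a\<close> is an endomorphism of \<open>(A,+)\<close>. Thus \<open>\<lambda>\<^sub>a a = c + a\<close> for
  \<open>c = a \<star> a\<close>, and \<open>a \<star> c = 0\<close> means \<open>\<lambda>\<^sub>a c = c\<close>. If \<open>x = m a = n c\<close>, applying
  \<open>\<lambda>\<^sub>a\<close> gives \<open>m c + x = x\<close>, so \<open>m c = 0\<close> and hence \<open>m\<^sup>2 a = n (m c) = 0\<close>; as \<open>a\<close>
  has infinite order, \<open>m = 0\<close>. For \<open>a \<in> \<zeta>\<^sub>2\<close> the element \<open>c\<close> is \<open>\<star>\<close>-central, so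
  \<open>a \<star> c = 0\<close>.\<close>

lemma (in comm_group) shear_int_pow_eq_imp_exponent_zero:
  assumes f: "f \<in> hom G G" and a: "a \<in> carrier G" and c: "c \<in> carrier G"
    and fa: "f a = c \<otimes> a" and fc: "f c = c"
    and inf: "\<forall>k::nat. k > 0 \<longrightarrow> a [^] k \<noteq> \<one>"
    and eq: "a [^] (m::int) = c [^] (n::int)"
  shows "m = 0"
proof (rule ccontr)
  assume "m \<noteq> 0"
  then have pos: "m * m > 0"
    by (simp add: zero_less_mult_iff linorder_neq_iff) arith
  have "c [^] m \<otimes> a [^] m = f (a [^] m)"
    using hom_int_pow[OF f a is_group is_group] by (simp add: fa int_pow_distrib a c)
  also have "\<dots> = a [^] m"
    using hom_int_pow[OF f c is_group is_group] by (simp add: eq fc)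
  finally have cm: "c [^] m = \<one>"
    using a c by (metis int_pow_closed l_one right_cancel one_closed)
  have "a [^] (m * m) = (c [^] n) [^] m"
    by (simp add: a eq flip: int_pow_pow)
  also have "\<dots> = (c [^] m) [^] n"
    by (simp add: c int_pow_pow mult.commute)
  finally have "a [^] (m * m) = \<one>"
    by (simp add: cm)
  moreover have "int (nat (m * m)) = m * m"
    using pos by simp
  ultimately have "a [^] nat (m * m) = \<one>"
    by (metis int_pow_int)
  then show False
    using inf pos by (metis zero_less_nat_eq)
qed

definition additive_group :: "'a set \<Rightarrow> ('a \<Rightarrow> 'a \<Rightarrow> 'a) \<Rightarrow> 'a \<Rightarrow> 'a monoid" where
  "additive_group A add zero = \<lparr>carrier = A, monoid.mult = add, one = zero\<rparr>"

definition lambda_map :: "('a \<Rightarrow> 'a \<Rightarrow> 'a) \<Rightarrow> ('a \<Rightarrow> 'a) \<Rightarrow> ('a \<Rightarrow> 'a \<Rightarrow> 'a) \<Rightarrow> 'a \<Rightarrow> 'a \<Rightarrow> 'a" where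
  "lambda_map add neg mul a x = add (mul a x) (neg a)"

lemma left_brace_additive_comm_group:
  assumes "left_brace A add zero neg mul e minv"
  shows "comm_group (additive_group A add zero)"
proof -
  have zero: "zero \<in> A" and add: "\<And>x y. x \<in> A \<Longrightarrow> y \<in> A \<Longrightarrow> add x y \<in> A"
    and neg: "\<And>x. x \<in> A \<Longrightarrow> neg x \<in> A"
    and assoc: "\<And>x y z. x \<in> A \<Longrightarrow> y \<in> A \<Longrightarrow> z \<in> A \<Longrightarrow> add (add x y) z = add x (add y z)"
    and commute: "\<And>x y. x \<in> A \<Longrightarrow> y \<in> A \<Longrightarrow> add x y = add y x"
    and left_zero: "\<And>x. x \<in> A \<Longrightarrow> add zero x = x"
    and left_neg: "\<And>x. x \<in> A \<Longrightarrow> add (neg x) x = zero"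
    using assms unfolding left_brace_def by auto
  show ?thesis
    unfolding additive_group_def
    by (rule comm_groupI) (auto intro: zero add neg assoc commute left_zero left_neg)
qed

locale left_brace_structure =
  fixes A :: "'a set" and add mul :: "'a \<Rightarrow> 'a \<Rightarrow> 'a" and zero e :: 'a and neg minv :: "'a \<Rightarrow> 'a"
  assumes left_brace: "left_brace A add zero neg mul e minv"
begin

abbreviation G :: "'a monoid" where
  "G \<equiv> additive_group A add zero"

sublocale comm_group G
  by (rule left_brace_additive_comm_group[OF left_brace])

lemma carrier_G: "carrier G = A"
  and mult_G: "x \<otimes>\<^bsub>G\<^esub> y = add x y"
  and one_G: "\<one>\<^bsub>G\<^esub> = zero"
  by (simp_all add: additive_group_def)

lemma mul_closed: "x \<in> A \<Longrightarrow> y \<in> A \<Longrightarrow> mul x y \<in> A"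
  using left_brace by (simp add: left_brace_def)

lemma inv_G:
  assumes "x \<in> A"
  shows "inv\<^bsub>G\<^esub> x = neg x"
proof -
  have "add (neg x) x = zero" "neg x \<in> A"
    using left_brace assms unfolding left_brace_def by auto
  then show ?thesis
    using assms by (intro inv_equality) (simp_all add: carrier_G mult_G one_G)
qed

lemma star_closed:
  assumes "x \<in> A" "y \<in> A"
  shows "star add neg mul x y \<in> A"
proof -
  have "star add neg mul x y = mul x y \<otimes>\<^bsub>G\<^esub> inv\<^bsub>G\<^esub> x \<otimes>\<^bsub>G\<^esub> inv\<^bsub>G\<^esub> y"
    using assms by (simp add: star_def mult_G inv_G)
  also have "\<dots> \<in> carrier G"
    using assms by (intro m_closed inv_closed) (simp_all add: carrier_G mul_closed)
  finally show ?thesis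
    by (simp add: carrier_G)
qed

lemma nat_mult_eq_nat_pow:
  assumes x: "x \<in> A"
  shows "nat_mult add zero n x = x [^]\<^bsub>G\<^esub> n"
proof (induction n)
  case 0
  then show ?case by (simp add: one_G)
next
  case (Suc n)
  have "x [^]\<^bsub>G\<^esub> Suc n = x \<otimes>\<^bsub>G\<^esub> x [^]\<^bsub>G\<^esub> n"
    using x nat_pow_closed[of x n] m_comm[of "x [^]\<^bsub>G\<^esub> n" x] by (simp add: carrier_G)
  then show ?case
    using Suc by (simp add: mult_G)
qed

lemma int_mult_eq_int_pow:
  assumes x: "x \<in> A"
  shows "int_mult add zero neg k x = x [^]\<^bsub>G\<^esub> k"
proof (cases "k < 0")
  case True
  have "x [^]\<^bsub>G\<^esub> nat (- k) \<in> A"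
    using x nat_pow_closed by (simp add: carrier_G)
  then show ?thesis
    unfolding int_mult_def int_pow_def2[of _ x k]
    using True by (simp add: nat_mult_eq_nat_pow[OF x] inv_G)
next
  case False
  then show ?thesis
    unfolding int_mult_def int_pow_def2[of _ x k]
    by (simp add: nat_mult_eq_nat_pow[OF x])
qed

lemma cyclic_add_eq_range_int_pow:
  "x \<in> A \<Longrightarrow> cyclic_add add zero neg x = range (\<lambda>k::int. x [^]\<^bsub>G\<^esub> k)"
  unfolding cyclic_add_def by (auto simp: int_mult_eq_int_pow)

lemma infinite_add_order_iff:
  "x \<in> A \<Longrightarrow> infinite_add_order add zero x \<longleftrightarrow> (\<forall>k::nat. k > 0 \<longrightarrow> x [^]\<^bsub>G\<^esub> k \<noteq> \<one>\<^bsub>G\<^esub>)"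
  unfolding infinite_add_order_def by (simp add: nat_mult_eq_nat_pow one_G)

lemma lambda_map_eq_mult_inv:
  assumes "a \<in> A"
  shows "lambda_map add neg mul a x = mul a x \<otimes>\<^bsub>G\<^esub> inv\<^bsub>G\<^esub> a"
  using assms by (simp add: lambda_map_def mult_G inv_G)

lemma lambda_map_hom:
  assumes a: "a \<in> A"
  shows "lambda_map add neg mul a \<in> hom G G"
proof (rule homI)
  fix x assume "x \<in> carrier G"
  then show "lambda_map add neg mul a x \<in> carrier G"
    unfolding lambda_map_eq_mult_inv[OF a]
    using a by (intro m_closed inv_closed) (simp_all add: carrier_G mul_closed)
next
  fix x y assume x: "x \<in> carrier G" and y: "y \<in> carrier G"
  have distrib: "mul a (add x y) = add (add (mul a x) (mul a y)) (neg a)"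
    using left_brace a x y by (simp add: left_brace_def carrier_G)
  have "lambda_map add neg mul a (x \<otimes>\<^bsub>G\<^esub> y)
      = (mul a x \<otimes>\<^bsub>G\<^esub> mul a y \<otimes>\<^bsub>G\<^esub> inv\<^bsub>G\<^esub> a) \<otimes>\<^bsub>G\<^esub> inv\<^bsub>G\<^esub> a"
    using a by (simp add: lambda_map_eq_mult_inv mult_G distrib inv_G)
  also have "\<dots> = lambda_map add neg mul a x \<otimes>\<^bsub>G\<^esub> lambda_map add neg mul a y"
  proof -
    have "mul a x \<in> carrier G" "mul a y \<in> carrier G" "a \<in> carrier G"
      using x y a by (simp_all add: carrier_G mul_closed)
    then show ?thesis
      using a by (simp add: lambda_map_eq_mult_inv m_ac)
  qed
  finally show "lambda_map add neg mul a (x \<otimes>\<^bsub>G\<^esub> y)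
      = lambda_map add neg mul a x \<otimes>\<^bsub>G\<^esub> lambda_map add neg mul a y" .
qed

lemma lambda_map_eq_star_mult:
  assumes a: "a \<in> A" and y: "y \<in> A"
  shows "lambda_map add neg mul a y = star add neg mul a y \<otimes>\<^bsub>G\<^esub> y"
proof -
  have "star add neg mul a y = lambda_map add neg mul a y \<otimes>\<^bsub>G\<^esub> inv\<^bsub>G\<^esub> y"
    using y by (simp add: star_def lambda_map_def mult_G inv_G)
  moreover have "lambda_map add neg mul a y \<in> carrier G" "y \<in> carrier G"
    using hom_in_carrier[OF lambda_map_hom[OF a]] y by (simp_all add: carrier_G)
  ultimately show ?thesis
    by (simp add: m_assoc)
qed

lemma cyclic_add_inter_star_self:
  assumes a: "a \<in> A" and inf: "infinite_add_order add zero a"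
    and ac: "star add neg mul a (star add neg mul a a) = zero"
  shows "cyclic_add add zero neg a \<inter> cyclic_add add zero neg (star add neg mul a a) = {zero}"
proof -
  define c where "c = star add neg mul a a"
  have c: "c \<in> A"
    unfolding c_def using a a by (rule star_closed)
  have aG: "a \<in> carrier G" and cG: "c \<in> carrier G"
    using a c by (simp_all add: carrier_G)
  have shear: "lambda_map add neg mul a a = c \<otimes>\<^bsub>G\<^esub> a"
    unfolding c_def using a a by (rule lambda_map_eq_star_mult)
  have "star add neg mul a c = \<one>\<^bsub>G\<^esub>"
    using ac by (simp add: c_def one_G)
  then have fixed: "lambda_map add neg mul a c = c"
    using cG by (simp add: lambda_map_eq_star_mult[OF a c])
  have powers: "cyclic_add add zero neg a = range (\<lambda>k::int. a [^]\<^bsub>G\<^esub> k)"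
    "cyclic_add add zero neg c = range (\<lambda>k::int. c [^]\<^bsub>G\<^esub> k)"
    using a c by (simp_all add: cyclic_add_eq_range_int_pow)
  have "x = zero" if xa: "x \<in> cyclic_add add zero neg a" and xc: "x \<in> cyclic_add add zero neg c" for x
  proof -
    obtain m n :: int where m: "x = a [^]\<^bsub>G\<^esub> m" and n: "x = c [^]\<^bsub>G\<^esub> n"
      using xa xc unfolding powers by blast
    have "m = 0"
    proof (rule shear_int_pow_eq_imp_exponent_zero[OF lambda_map_hom[OF a] aG cG shear fixed])
      show "\<forall>k::nat. k > 0 \<longrightarrow> a [^]\<^bsub>G\<^esub> k \<noteq> \<one>\<^bsub>G\<^esub>"
        using inf a by (simp add: infinite_add_order_iff)
      show "a [^]\<^bsub>G\<^esub> m = c [^]\<^bsub>G\<^esub> n"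
        using m n by simp
    qed
    then show ?thesis
      using m by (simp add: one_G)
  qed
  moreover have "zero \<in> cyclic_add add zero neg a \<inter> cyclic_add add zero neg c"
    using int_pow_0[of G a] int_pow_0[of G c] unfolding powers one_G by (metis IntI rangeI)
  ultimately show ?thesis
    unfolding c_def by blast
qed

end

lemma star_center2_imp_star_star_self_eq_zero:
  assumes "a \<in> star_center2 A add zero neg mul"
  shows "star add neg mul a (star add neg mul a a) = zero"
proof -
  have "a \<in> A" and "star add neg mul a a \<in> star_center A add zero neg mul"
    using assms unfolding star_center2_def by auto
  then show ?thesis
    unfolding star_center_def by auto
qed

theorem proposition3p3:
  fixes A :: "'a set" and add mul :: "'a \<Rightarrow> 'a \<Rightarrow> 'a" and zero one :: 'a
    and neg minv :: "'a \<Rightarrow> 'a" and a :: 'a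
  assumes brace: "left_brace A add zero neg mul one minv"
    and aA: "a \<in> A"
    and inf: "infinite_add_order add zero a"
  shows "(star add neg mul a (star add neg mul a a) = zero \<longrightarrow>
            cyclic_add add zero neg a \<inter> cyclic_add add zero neg (star add neg mul a a) = {zero})
       \<and> (a \<in> star_center2 A add zero neg mul \<longrightarrow>
            cyclic_add add zero neg a \<inter> cyclic_add add zero neg (star add neg mul a a) = {zero})"
proof -
  interpret left_brace_structure A add mul zero one neg minv
    by unfold_locales (rule brace)
  show ?thesis
    using cyclic_add_inter_star_self[OF aA inf] star_center2_imp_star_star_self_eq_zero[of a]
    by (intro conjI impI) simp_all
qed

end
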